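(* If $\delta>\frac{\pi^2}{4}-1$, then $F_1^{-1}(\alpha)>F_2(\alpha;\delta)$ for every $\alpha\in(0,1)$.
   Context: Real-valued maps: for $\alpha\in[0,1]$, $\sigma^2\ge0$ (with $\sigma=\sqrt{\sigma^2}$, $\arctan(\alpha/0)=\pi/2$ for $\alpha>0$), $\psi_2(\alpha,\sigma^2;\delta)=\frac1\delta\big[\alpha^2+\sigma^2+1-\frac{4\sigma}\pi-\frac{4\alpha}\pi\arctan(\alpha/\sigma)\big]$. For $\alpha\in(0,1)$ let $F_1^{-1}(\alpha):=\alpha^2\cot^2(\pi\alpha/2)$ (the value of $\sigma^2$ for which $\alpha$ is the positive fixed point of $\alpha\mapsto\frac2\pi\arctan(\alpha/\sigma)$). For $\delta>1$ and $\alpha\in[0,1]$, $F_2(\alpha;\delta)$ denotes the unique solution $\sigma^2\in[0,\infty)$ of $\sigma^2=\psi_2(\alpha,\sigma^2;\delta)$ (existence and uniqueness are known). *)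

theory Defs
  imports "HOL-Analysis.Analysis"
begin

text \<open>arctan(alpha/sigma) with the convention arctan(alpha/0) = pi/2 for alpha > 0
  (and arctan(0/0) taken as 0; it is multiplied by alpha = 0 anyway).\<close>
definition arctan_ratio :: "real \<Rightarrow> real \<Rightarrow> real" where
  "arctan_ratio a s = (if s = 0 then (if a > 0 then pi / 2 else 0) else arctan (a / s))"

definition psi2 :: "real \<Rightarrow> real \<Rightarrow> real \<Rightarrow> real" where
  "psi2 a s2 \<delta> = (1 / \<delta>) * (a\<^sup>2 + s2 + 1 - 4 * sqrt s2 / pi
      - 4 * a / pi * arctan_ratio a (sqrt s2))"

definition F1_inv :: "real \<Rightarrow> real" where
  "F1_inv a = a\<^sup>2 * (cot (pi * a / 2))\<^sup>2"

text \<open>The unique nonnegative solution s2 of s2 = psi2 a s2 delta (for delta > 1, a in [0,1]).\<close>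
definition F2 :: "real \<Rightarrow> real \<Rightarrow> real" where
  "F2 a \<delta> = (THE s2. s2 \<ge> 0 \<and> s2 = psi2 a s2 \<delta>)"

end

theory Submission
  imports Defs
begin

text \<open>
  Writing \<open>\<sigma> = sqrt s\<close>, the fixed-point equation \<open>s = psi2 a s \<delta>\<close> with \<open>s > 0\<close> says exactly that
  \<open>r(\<sigma>) = (\<delta> - 1) \<sigma>\<^sup>2 - a\<^sup>2 - 1 + 4 (\<sigma> + a arctan (a/\<sigma>)) / \<pi>\<close> vanishes. Since \<open>r\<close> is strictly
  increasing, negative near \<open>0\<close>, and \<open>s = 0\<close> is never a fixed point, \<open>F2 a \<delta> < \<sigma>\<^sub>1\<^sup>2\<close> as soon as
  \<open>r(\<sigma>\<^sub>1) > 0\<close>. At \<open>\<sigma>\<^sub>1 = a cot (\<pi> a/2)\<close> we have \<open>arctan (a/\<sigma>\<^sub>1) = \<pi> a/2\<close>, and \<open>r(\<sigma>\<^sub>1) > 0\<close> for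
  \<open>\<delta> > \<pi>\<^sup>2/4 - 1\<close> reduces, after substituting \<open>t = \<pi> a/2\<close> and clearing denominators, to the
  nonnegativity of a trigonometric function \<open>G\<close> on \<open>(0, \<pi>/2)\<close>. This follows from
  \<open>G(0) = G(\<pi>/2) = 0\<close> by differentiating three times: each derivative changes sign at most once,
  from positive to negative.
\<close>

lemma pi_squared_bounds: "8 < pi\<^sup>2" "pi\<^sup>2 < 10"
proof -
  have "3.1 \<le> pi" "pi \<le> 3.15" using pi_approx by auto
  then have "3.1 * 3.1 \<le> pi * pi" "pi * pi \<le> 3.15 * 3.15" by (intro mult_mono; simp)+
  then show "8 < pi\<^sup>2" "pi\<^sup>2 < 10" by (auto simp: power2_eq_square)
qed

definition stays_negative_on :: "real \<Rightarrow> real \<Rightarrow> (real \<Rightarrow> real) \<Rightarrow> bool" where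
  "stays_negative_on a b g \<longleftrightarrow> (\<forall>x y. a < x \<longrightarrow> x < y \<longrightarrow> y < b \<longrightarrow> g x < 0 \<longrightarrow> g y < 0)"

lemma stays_negative_on_antitone:
  assumes "\<And>x y. a < x \<Longrightarrow> x < y \<Longrightarrow> y < b \<Longrightarrow> g y \<le> g x"
  shows "stays_negative_on a b g"
  using assms unfolding stays_negative_on_def by fastforce

lemma stays_negative_on_mult:
  assumes "stays_negative_on a b g" and "\<And>x. a < x \<Longrightarrow> x < b \<Longrightarrow> w x > 0"
  shows "stays_negative_on a b (\<lambda>x. w x * g x)"
  unfolding stays_negative_on_def
proof (intro allI impI)
  fix x y assume xy: "a < x" "x < y" "y < b" "w x * g x < 0"
  then have "g x < 0" using assms(2)[of x] by (simp add: mult_less_0_iff)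
  then have "g y < 0" using assms(1) xy unfolding stays_negative_on_def by blast
  then show "w y * g y < 0" using assms(2)[of y] xy by (simp add: mult_pos_neg)
qed

lemma decreasing_after_negative_value:
  assumes "f a \<ge> 0" and "a < x" "x < y" "y \<le> b" "f x < 0"
    and der: "\<And>x. a \<le> x \<Longrightarrow> x \<le> b \<Longrightarrow> (f has_real_derivative f' x) (at x)"
    and neg: "stays_negative_on a b f'"
  shows "f y < f x"
proof -
  \<comment> \<open>\<open>f a \<ge> 0 > f x\<close> forces \<open>f' < 0\<close> somewhere in \<open>(a, x)\<close>, hence everywhere in \<open>(x, b)\<close>.\<close>
  obtain z where z: "a < z" "z < x" "f x - f a = (x - a) * f' z"
    using MVT2[of a x f f'] der \<open>a < x\<close> \<open>x < y\<close> \<open>y \<le> b\<close> by force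
  have "f' z < 0"
    using z \<open>a < x\<close> \<open>f a \<ge> 0\<close> \<open>f x < 0\<close> by (smt (verit) mult_nonneg_nonneg)
  obtain w where w: "x < w" "w < y" "f y - f x = (y - x) * f' w"
    using MVT2[of x y f f'] der \<open>a < x\<close> \<open>x < y\<close> \<open>y \<le> b\<close> by force
  have "f' w < 0"
    using neg \<open>f' z < 0\<close> z w \<open>y \<le> b\<close> unfolding stays_negative_on_def by force
  then have "(y - x) * f' w < 0"
    using \<open>x < y\<close> by (simp add: mult_pos_neg)
  then show ?thesis using w by linarith
qed

lemma stays_negative_on_deriv:
  assumes "f a \<ge> 0"
    and "\<And>x. a \<le> x \<Longrightarrow> x \<le> b \<Longrightarrow> (f has_real_derivative f' x) (at x)"
    and "stays_negative_on a b f'"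
  shows "stays_negative_on a b f"
  unfolding stays_negative_on_def
  using decreasing_after_negative_value[OF assms(1) _ _ _ _ assms(2,3)]
  by (meson less_imp_le order.strict_trans)

lemma nonneg_between_of_deriv_stays_negative:
  assumes "f a \<ge> 0" "f b \<ge> 0" "a < x" "x < b"
    and "\<And>x. a \<le> x \<Longrightarrow> x \<le> b \<Longrightarrow> (f has_real_derivative f' x) (at x)"
    and "stays_negative_on a b f'"
  shows "f x \<ge> 0"
  using decreasing_after_negative_value[of f a x b b f'] assms by force

text \<open>\<open>trig_G\<close> is \<open>\<pi>\<^sup>2 sin\<^sup>2 t\<close> times the quantity in \<open>cot_quadratic_nonneg\<close> below, with
  \<open>a = 2t/\<pi>\<close>; \<open>trig_H\<close> and \<open>trig_K\<close> are the factors of its successive derivatives.\<close>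

definition trig_G :: "real \<Rightarrow> real" where
  "trig_G t = (pi\<^sup>2 - 8) * t\<^sup>2 * (cos t)\<^sup>2 + 8 * t * cos t * sin t + (4 * t\<^sup>2 - pi\<^sup>2) * (sin t)\<^sup>2"

definition trig_H :: "real \<Rightarrow> real" where
  "trig_H t = (2 * pi\<^sup>2 - 8) * t * cos t - ((2 * pi\<^sup>2 - 8) - (24 - 2 * pi\<^sup>2) * t\<^sup>2) * sin t"

definition trig_K :: "real \<Rightarrow> real" where
  "trig_K t = (24 - 2 * pi\<^sup>2) * t * cos t - (6 * pi\<^sup>2 - 56) * sin t"

lemma trig_G_deriv: "(trig_G has_real_derivative cos t * trig_H t) (at t)"
  unfolding trig_G_def trig_H_def
  by (auto intro!: derivative_eq_intros simp: algebra_simps power2_eq_square)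

lemma trig_H_deriv: "(trig_H has_real_derivative t * trig_K t) (at t)"
  unfolding trig_H_def trig_K_def
  by (auto intro!: derivative_eq_intros simp: algebra_simps power2_eq_square)

lemma trig_K_deriv:
  "(trig_K has_real_derivative (80 - 8 * pi\<^sup>2) * cos t - (24 - 2 * pi\<^sup>2) * (t * sin t)) (at t)"
  unfolding trig_K_def by (auto intro!: derivative_eq_intros simp: algebra_simps)

lemma trig_K_deriv_antitone:
  assumes "0 < x" "x < y" "y < pi / 2"
  shows "(80 - 8 * pi\<^sup>2) * cos y - (24 - 2 * pi\<^sup>2) * (y * sin y)
    \<le> (80 - 8 * pi\<^sup>2) * cos x - (24 - 2 * pi\<^sup>2) * (x * sin x)"
proof -
  have "cos y \<le> cos x" using assms by (intro cos_monotone_0_pi_le) auto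
  moreover have "x * sin x \<le> y * sin y"
    using assms by (intro mult_mono sin_monotone_2pi_le sin_ge_zero) auto
  moreover have "0 \<le> 80 - 8 * pi\<^sup>2" "0 \<le> 24 - 2 * pi\<^sup>2" using pi_squared_bounds by auto
  ultimately show ?thesis by (smt (verit) mult_left_mono)
qed

lemma trig_G_nonneg:
  assumes "0 < t" "t < pi / 2"
  shows "trig_G t \<ge> 0"
proof -
  have pos: "\<And>x. 0 < x \<Longrightarrow> x < pi / 2 \<Longrightarrow> cos x > 0" by (intro cos_gt_zero_pi) auto
  have "stays_negative_on 0 (pi / 2) trig_K"
    by (intro stays_negative_on_deriv[OF _ trig_K_deriv] stays_negative_on_antitone
        trig_K_deriv_antitone) (auto simp: trig_K_def)
  then have "stays_negative_on 0 (pi / 2) trig_H"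
    by (intro stays_negative_on_deriv[OF _ trig_H_deriv] stays_negative_on_mult)
      (auto simp: trig_H_def)
  then have "stays_negative_on 0 (pi / 2) (\<lambda>t. cos t * trig_H t)"
    using pos by (rule stays_negative_on_mult)
  moreover have "trig_G 0 = 0" "trig_G (pi / 2) = 0"
    by (simp_all add: trig_G_def power2_eq_square)
  ultimately show ?thesis
    using nonneg_between_of_deriv_stays_negative[of trig_G 0 "pi / 2" t "\<lambda>t. cos t * trig_H t"] assms
    by (simp add: trig_G_deriv)
qed

lemma cot_quadratic_nonneg:
  fixes a :: real
  defines "\<sigma> \<equiv> a * cot (pi * a / 2)"
  assumes "0 < a" "a < 1"
  shows "(pi\<^sup>2 / 4 - 2) * \<sigma>\<^sup>2 + 4 * \<sigma> / pi + a\<^sup>2 - 1 \<ge> 0"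
proof -
  define t where "t = pi * a / 2"
  have t: "0 < t" "t < pi / 2" using assms by (auto simp: t_def)
  have "sin t > 0" using t by (intro sin_gt_zero) auto
  have a: "a = 2 * t / pi" by (simp add: t_def)
  have \<sigma>: "\<sigma> = 2 * t * cos t / (pi * sin t)"
    unfolding \<sigma>_def t_def[symmetric] cot_def a by simp
  have "pi\<^sup>2 * (sin t)\<^sup>2 * ((pi\<^sup>2 / 4 - 2) * \<sigma>\<^sup>2 + 4 * \<sigma> / pi + a\<^sup>2 - 1) = trig_G t"
    unfolding trig_G_def \<sigma> a using \<open>sin t > 0\<close> by (simp add: field_simps power2_eq_square)
  moreover have "trig_G t \<ge> 0" using t by (rule trig_G_nonneg)
  ultimately show ?thesis
    using \<open>sin t > 0\<close> by (metis zero_le_mult_iff not_less zero_less_power2 pi_gt_zero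
        less_irrefl mult_pos_pos)
qed

definition fixed_point_residual :: "real \<Rightarrow> real \<Rightarrow> real \<Rightarrow> real" where
  "fixed_point_residual a \<delta> \<sigma> = (\<delta> - 1) * \<sigma>\<^sup>2 - a\<^sup>2 - 1 + 4 * (\<sigma> + a * arctan (a / \<sigma>)) / pi"

lemma psi2_square_eq:
  assumes "\<sigma> > 0" "\<delta> \<noteq> 0"
  shows "psi2 a (\<sigma>\<^sup>2) \<delta> = \<sigma>\<^sup>2 - fixed_point_residual a \<delta> \<sigma> / \<delta>"
  using assms unfolding psi2_def arctan_ratio_def fixed_point_residual_def
  by (simp add: field_simps)

lemma psi2_zero_pos:
  assumes "\<delta> > 0" "a < 1"
  shows "psi2 a 0 \<delta> > 0"
proof (cases "a > 0")
  case True
  then have "psi2 a 0 \<delta> = (1 - a)\<^sup>2 / \<delta>"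
    unfolding psi2_def arctan_ratio_def by (simp add: power2_eq_square field_simps)
  then show ?thesis using assms by simp
next
  case False
  then have "psi2 a 0 \<delta> = (a\<^sup>2 + 1) / \<delta>"
    unfolding psi2_def arctan_ratio_def by simp
  then show ?thesis using assms by (smt (verit) divide_pos_pos zero_le_power2)
qed

lemma add_mult_arctan_div_mono:
  fixes a x y :: real
  assumes "0 < x" "x \<le> y"
  shows "x + a * arctan (a / x) \<le> y + a * arctan (a / y)"
proof (rule DERIV_nonneg_imp_nondecreasing[OF \<open>x \<le> y\<close>])
  fix z assume "x \<le> z" "z \<le> y"
  then have "z > 0" using assms by linarith
  then have "((\<lambda>x. x + a * arctan (a / x)) has_real_derivative z\<^sup>2 / (z\<^sup>2 + a\<^sup>2)) (at z)"
    by (auto intro!: derivative_eq_intros simp: field_simps power2_eq_square add_pos_nonneg)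
  then show "\<exists>d. ((\<lambda>x. x + a * arctan (a / x)) has_real_derivative d) (at z) \<and> d \<ge> 0"
    by fastforce
qed

lemma fixed_point_residual_strict_mono:
  assumes "\<delta> > 1" "0 < x" "x < y"
  shows "fixed_point_residual a \<delta> x < fixed_point_residual a \<delta> y"
proof -
  have "(\<delta> - 1) * x\<^sup>2 < (\<delta> - 1) * y\<^sup>2"
    using assms by (simp add: power_strict_mono)
  moreover have "4 * (x + a * arctan (a / x)) / pi \<le> 4 * (y + a * arctan (a / y)) / pi"
    using add_mult_arctan_div_mono[of x y a] assms by (simp add: divide_right_mono)
  ultimately show ?thesis unfolding fixed_point_residual_def by linarith
qed

lemma fixed_point_residual_neg_near_zero:
  assumes "\<delta> > 1" "0 \<le> a" "a < 1"
  obtains \<sigma> where "\<sigma> > 0" "fixed_point_residual a \<delta> \<sigma> < 0"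
proof
  define \<sigma> where "\<sigma> = min 1 ((1 - a)\<^sup>2 / (2 * (\<delta> + 1)))"
  have "0 < \<sigma>" "\<sigma> \<le> 1" "\<sigma> \<le> (1 - a)\<^sup>2 / (2 * (\<delta> + 1))"
    using assms by (auto simp: \<sigma>_def)
  then have \<sigma>: "0 < \<sigma>" "\<sigma> \<le> 1" "(\<delta> + 1) * \<sigma> \<le> (1 - a)\<^sup>2 / 2"
    using assms by (auto simp: field_simps)
  show "\<sigma> > 0" by (fact \<sigma>(1))
  have "a * arctan (a / \<sigma>) \<le> a * (pi / 2)"
    using arctan_ubound[of "a / \<sigma>"] \<open>0 \<le> a\<close> by (intro mult_left_mono) auto
  then have "4 * (a * arctan (a / \<sigma>)) / pi \<le> 2 * a"
    by (simp add: field_simps)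
  moreover have "4 * \<sigma> / pi \<le> 2 * \<sigma>"
    using pi_ge_two \<sigma> by (simp add: field_simps)
  moreover have "(\<delta> - 1) * \<sigma>\<^sup>2 \<le> (\<delta> - 1) * \<sigma>"
    using \<sigma> assms by (simp add: power2_eq_square mult_left_le)
  moreover have "4 * (\<sigma> + a * arctan (a / \<sigma>)) / pi = 4 * \<sigma> / pi + 4 * (a * arctan (a / \<sigma>)) / pi"
    by (simp add: add_divide_distrib)
  moreover have "(1 - a)\<^sup>2 = 1 - 2 * a + a\<^sup>2"
    by (simp add: power2_eq_square algebra_simps)
  ultimately have "fixed_point_residual a \<delta> \<sigma> \<le> (\<delta> + 1) * \<sigma> - (1 - a)\<^sup>2"
    unfolding fixed_point_residual_def by (simp add: algebra_simps)
  moreover have "(1 - a)\<^sup>2 > 0" using \<open>a < 1\<close> by simp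
  ultimately show "fixed_point_residual a \<delta> \<sigma> < 0"
    using \<sigma>(3) by linarith
qed

lemma F2_eq_square_of_residual_root:
  assumes "\<delta> > 1" "a < 1" "\<sigma> > 0" "fixed_point_residual a \<delta> \<sigma> = 0"
  shows "F2 a \<delta> = \<sigma>\<^sup>2"
  unfolding F2_def
proof (rule the_equality)
  show "\<sigma>\<^sup>2 \<ge> 0 \<and> \<sigma>\<^sup>2 = psi2 a (\<sigma>\<^sup>2) \<delta>"
    using assms psi2_square_eq[of \<sigma> \<delta> a] by simp
next
  fix s assume s: "s \<ge> 0 \<and> s = psi2 a s \<delta>"
  then have "s > 0" using psi2_zero_pos[of \<delta> a] assms by (cases "s = 0") auto
  then have "fixed_point_residual a \<delta> (sqrt s) = 0"
    using s psi2_square_eq[of "sqrt s" \<delta> a] assms by simp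
  then have "sqrt s = \<sigma>"
    using fixed_point_residual_strict_mono[OF \<open>\<delta> > 1\<close>] \<open>s > 0\<close> assms
    by (metis linorder_neqE_linordered_idom less_irrefl real_sqrt_gt_zero)
  then show "s = \<sigma>\<^sup>2" using \<open>s > 0\<close> by auto
qed

lemma F2_less_square_of_residual_pos:
  assumes "\<delta> > 1" "0 \<le> a" "a < 1" "\<sigma>\<^sub>1 > 0" "fixed_point_residual a \<delta> \<sigma>\<^sub>1 > 0"
  shows "F2 a \<delta> < \<sigma>\<^sub>1\<^sup>2"
proof -
  obtain \<sigma>\<^sub>0 where \<sigma>\<^sub>0: "\<sigma>\<^sub>0 > 0" "fixed_point_residual a \<delta> \<sigma>\<^sub>0 < 0"
    using fixed_point_residual_neg_near_zero assms by blast
  then have "\<sigma>\<^sub>0 \<le> \<sigma>\<^sub>1"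
    using fixed_point_residual_strict_mono[OF \<open>\<delta> > 1\<close>, of \<sigma>\<^sub>1 \<sigma>\<^sub>0 a] assms by force
  moreover have "continuous_on {\<sigma>\<^sub>0..\<sigma>\<^sub>1} (fixed_point_residual a \<delta>)"
    unfolding fixed_point_residual_def using \<sigma>\<^sub>0 by (auto intro!: continuous_intros)
  ultimately obtain \<sigma> where \<sigma>: "\<sigma>\<^sub>0 \<le> \<sigma>" "\<sigma> \<le> \<sigma>\<^sub>1" "fixed_point_residual a \<delta> \<sigma> = 0"
    using IVT'[of "fixed_point_residual a \<delta>" \<sigma>\<^sub>0 0 \<sigma>\<^sub>1] \<sigma>\<^sub>0 assms by auto
  then have "\<sigma> < \<sigma>\<^sub>1" using assms by (metis order.order_iff_strict less_irrefl)
  moreover have "F2 a \<delta> = \<sigma>\<^sup>2"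
    using F2_eq_square_of_residual_root \<sigma> \<sigma>\<^sub>0 assms by simp
  ultimately show ?thesis using \<sigma> \<sigma>\<^sub>0 by (simp add: power_strict_mono)
qed

lemma fixed_point_residual_cot_pos:
  assumes "\<delta> > pi\<^sup>2 / 4 - 1" "0 < a" "a < 1"
  shows "fixed_point_residual a \<delta> (a * cot (pi * a / 2)) > 0"
proof -
  define t where "t = pi * a / 2"
  define \<sigma> where "\<sigma> = a * cot t"
  have t: "0 < t" "t < pi / 2" using assms by (auto simp: t_def)
  have "sin t > 0" "cos t > 0" using t by (auto intro: sin_gt_zero cos_gt_zero_pi)
  then have "\<sigma> > 0" "a / \<sigma> = tan t"
    using assms by (auto simp: \<sigma>_def cot_def tan_def)
  then have "arctan (a / \<sigma>) = t" using t by (simp add: arctan_tan)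
  then have "fixed_point_residual a \<delta> \<sigma> = (\<delta> - 1) * \<sigma>\<^sup>2 + 4 * \<sigma> / pi + a\<^sup>2 - 1"
    unfolding fixed_point_residual_def t_def by (simp add: field_simps power2_eq_square)
  moreover have "(\<delta> - 1) * \<sigma>\<^sup>2 > (pi\<^sup>2 / 4 - 2) * \<sigma>\<^sup>2" using assms \<open>\<sigma> > 0\<close> by simp
  moreover have "(pi\<^sup>2 / 4 - 2) * \<sigma>\<^sup>2 + 4 * \<sigma> / pi + a\<^sup>2 - 1 \<ge> 0"
    using cot_quadratic_nonneg[OF assms(2,3)] by (simp add: \<sigma>_def t_def)
  ultimately show ?thesis by (simp add: \<sigma>_def t_def)
qed

theorem mainTheorem19:
  fixes \<delta> :: real
  assumes "\<delta> > pi\<^sup>2 / 4 - 1"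
  shows "\<forall>a::real. 0 < a \<and> a < 1 \<longrightarrow> F1_inv a > F2 a \<delta>"
proof (intro allI impI)
  fix a :: real assume a: "0 < a \<and> a < 1"
  define \<sigma>\<^sub>1 where "\<sigma>\<^sub>1 = a * cot (pi * a / 2)"
  have "\<delta> > 1" using assms pi_squared_bounds by auto
  have "0 < pi * a / 2" "pi * a / 2 < pi / 2" using a by auto
  then have "sin (pi * a / 2) > 0" "cos (pi * a / 2) > 0"
    by (intro sin_gt_zero cos_gt_zero_pi; linarith)+
  then have "\<sigma>\<^sub>1 > 0" using a by (simp add: \<sigma>\<^sub>1_def cot_def)
  have "F2 a \<delta> < \<sigma>\<^sub>1\<^sup>2"
    using F2_less_square_of_residual_pos \<open>\<delta> > 1\<close> a \<open>\<sigma>\<^sub>1 > 0\<close>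
      fixed_point_residual_cot_pos[OF assms] by (simp add: \<sigma>\<^sub>1_def)
  then show "F1_inv a > F2 a \<delta>"
    by (simp add: F1_inv_def \<sigma>\<^sub>1_def power_mult_distrib)
qed

end
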